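(* Let $a>0$, $b,c\ge 0$, and consider the system $$\dot x=x(1-y+cx-axz),\qquad \dot y=y(-1+x),\qquad \dot z=z(-b+ax^2).$$ Let $f$ be an irreducible Darboux polynomial of degree greater than one with non-zero cofactor $$K=\alpha_0+\alpha_1x+\alpha_2y+\alpha_3z+N_4a\,x^2-N_6a\,xz,$$ where $\alpha_i\in\mathbb{C}$ and $N_4,N_6\in\mathbb{N}\cup\{0\}$. Then $\alpha_0=\alpha_1=\alpha_3=N_4=N_6=0$.
   Context: A Darboux polynomial is $f\in\mathbb{C}[x,y,z]$ with $x(1-y+cx-axz)f_x+y(-1+x)f_y+z(-b+ax^2)f_z=Kf$ for a polynomial cofactor $K$ of degree at most two. *)

theory Defs
  imports Complex_Main "HOL-Computational_Algebra.Polynomial_Factorial"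
begin

text \<open>Polynomials in C[x,y,z], represented as nested univariate polynomials:
  outermost variable z, middle y, innermost x, i.e. C[x][y][z].\<close>

type_synonym mpoly3 = "complex poly poly poly"

definition cst3 :: "complex \<Rightarrow> mpoly3" where
  "cst3 r = [:[:[:r:]:]:]"

definition X3 :: mpoly3 where "X3 = [:[:[:0, 1:]:]:]"
definition Y3 :: mpoly3 where "Y3 = [:[:0, 1:]:]"
definition Z3 :: mpoly3 where "Z3 = [:0, 1:]"

definition dX3 :: "mpoly3 \<Rightarrow> mpoly3" where "dX3 f = map_poly (map_poly pderiv) f"
definition dY3 :: "mpoly3 \<Rightarrow> mpoly3" where "dY3 f = map_poly pderiv f"
definition dZ3 :: "mpoly3 \<Rightarrow> mpoly3" where "dZ3 f = pderiv f"

definition coeff3 :: "mpoly3 \<Rightarrow> nat \<Rightarrow> nat \<Rightarrow> nat \<Rightarrow> complex" where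
  "coeff3 f i j k = coeff (coeff (coeff f k) j) i"

definition tdeg3 :: "mpoly3 \<Rightarrow> nat" where
  "tdeg3 f = Max (insert 0 {i + j + k | i j k. coeff3 f i j k \<noteq> 0})"

definition Xfield :: "real \<Rightarrow> real \<Rightarrow> real \<Rightarrow> mpoly3 \<Rightarrow> mpoly3" where
  "Xfield a b c f =
     X3 * (1 - Y3 + cst3 (of_real c) * X3 - cst3 (of_real a) * X3 * Z3) * dX3 f
   + Y3 * (-1 + X3) * dY3 f
   + Z3 * (- cst3 (of_real b) + cst3 (of_real a) * X3 ^ 2) * dZ3 f"

definition darboux :: "real \<Rightarrow> real \<Rightarrow> real \<Rightarrow> mpoly3 \<Rightarrow> mpoly3 \<Rightarrow> bool" where
  "darboux a b c f K \<longleftrightarrow> f \<noteq> 0 \<and> tdeg3 K \<le> 2 \<and> Xfield a b c f = K * f"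

end

theory Submission
  imports Defs
begin

text \<open>Let \<open>f(i,j,k)\<close> be the coefficient of \<open>x^i y^j z^k\<close> in \<open>f\<close>. Comparing coefficients in
  \<open>X f = K f\<close> gives a linear recurrence among the \<open>f(i,j,k)\<close>. As \<open>f\<close> is irreducible of degree
  greater than one, none of \<open>x, y, z\<close> divides \<open>f\<close>, so \<open>f\<close> has terms free of \<open>x\<close>, of \<open>y\<close> and
  of \<open>z\<close>. The recurrence taken just beyond an extremal such term (largest \<open>k\<close> or \<open>j\<close> among
  the \<open>x\<close>-free terms, largest \<open>i\<close> among the \<open>z\<close>-free ones) gives \<open>\<alpha>3 = \<alpha>2 = N4 = 0\<close>.
  On the face of the support where \<open>i + 2j\<close> is maximal the recurrence reduces to
  \<open>i f(i,j,k) = a k f(i-2,j+1,k)\<close>, which leaves the single term \<open>y^q\<close> there. This term gives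
  \<open>\<alpha>0 = -q\<close>, and \<open>N6 \<noteq> 0\<close> would propagate a nonzero coefficient along the line
  \<open>i + 2j = 2q + 1\<close>, \<open>k = 1\<close> down to \<open>j < 0\<close>. Among the \<open>y\<close>-free terms, the largest \<open>k\<close>
  gives \<open>\<alpha>1 = 0\<close> and the largest \<open>i + k\<close> a term \<open>x^n\<close> with \<open>\<alpha>0 = n\<close>, whence
  \<open>n = q = 0\<close>.\<close>

text \<open>Integer indices, with coefficient \<open>0\<close> outside the first octant, so that recurrences
  may shift indices without truncated subtraction.\<close>

definition icoeff3 :: "mpoly3 \<Rightarrow> int \<Rightarrow> int \<Rightarrow> int \<Rightarrow> complex" where
  "icoeff3 f i j k =
     (if 0 \<le> i \<and> 0 \<le> j \<and> 0 \<le> k then coeff3 f (nat i) (nat j) (nat k) else 0)"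

lemma icoeff3_outside: "i < 0 \<or> j < 0 \<or> k < 0 \<Longrightarrow> icoeff3 f i j k = 0"
  by (auto simp: icoeff3_def)

lemma icoeff3_of_nat: "icoeff3 f (int i) (int j) (int k) = coeff3 f i j k"
  by (simp add: icoeff3_def)

lemma icoeff3_add: "icoeff3 (f + g) i j k = icoeff3 f i j k + icoeff3 g i j k"
  by (simp add: icoeff3_def coeff3_def)

lemma icoeff3_diff: "icoeff3 (f - g) i j k = icoeff3 f i j k - icoeff3 g i j k"
  by (simp add: icoeff3_def coeff3_def)

lemma icoeff3_cst3_mult: "icoeff3 (cst3 r * f) i j k = r * icoeff3 f i j k"
  by (simp add: icoeff3_def coeff3_def cst3_def)

lemma coeff_pCons_0: "coeff (pCons 0 p) n = (if n = 0 then 0 else coeff p (n - 1))"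
  by (cases n) auto

lemma icoeff3_X3_mult: "icoeff3 (X3 * f) i j k = icoeff3 f (i - 1) j k"
  by (auto simp: icoeff3_def coeff3_def X3_def coeff_pCons_0 nat_diff_distrib')

lemma icoeff3_Y3_mult: "icoeff3 (Y3 * f) i j k = icoeff3 f i (j - 1) k"
  by (auto simp: icoeff3_def coeff3_def Y3_def coeff_pCons_0 nat_diff_distrib')

lemma icoeff3_Z3_mult: "icoeff3 (Z3 * f) i j k = icoeff3 f i j (k - 1)"
  by (auto simp: icoeff3_def coeff3_def Z3_def coeff_pCons_0 nat_diff_distrib')

lemma coeff3_dX3: "coeff3 (dX3 f) i j k = of_nat (Suc i) * coeff3 f (Suc i) j k"
  by (simp add: coeff3_def dX3_def coeff_map_poly coeff_pderiv del: of_nat_Suc)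

lemma coeff3_dY3: "coeff3 (dY3 f) i j k = of_nat (Suc j) * coeff3 f i (Suc j) k"
  by (simp add: coeff3_def dY3_def coeff_map_poly coeff_pderiv of_nat_poly del: of_nat_Suc)

lemma coeff3_dZ3: "coeff3 (dZ3 f) i j k = of_nat (Suc k) * coeff3 f i j (Suc k)"
  by (simp add: coeff3_def dZ3_def coeff_pderiv of_nat_poly del: of_nat_Suc)

lemma icoeff3_dX3: "icoeff3 (dX3 f) i j k = of_int (i + 1) * icoeff3 f (i + 1) j k"
  by (cases "0 \<le> i"; cases "i = -1") (auto simp: icoeff3_def coeff3_dX3 nat_add_distrib)

lemma icoeff3_dY3: "icoeff3 (dY3 f) i j k = of_int (j + 1) * icoeff3 f i (j + 1) k"
  by (cases "0 \<le> j"; cases "j = -1") (auto simp: icoeff3_def coeff3_dY3 nat_add_distrib)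

lemma icoeff3_dZ3: "icoeff3 (dZ3 f) i j k = of_int (k + 1) * icoeff3 f i j (k + 1)"
  by (cases "0 \<le> k"; cases "k = -1") (auto simp: icoeff3_def coeff3_dZ3 nat_add_distrib)

lemma icoeff3_cst3: "icoeff3 (cst3 d) i j k = (if i = 0 \<and> j = 0 \<and> k = 0 then d else 0)"
  by (auto simp: icoeff3_def coeff3_def cst3_def coeff_pCons split: nat.split)

lemma icoeff3_eqI: "(\<And>i j k. icoeff3 f i j k = icoeff3 g i j k) \<Longrightarrow> f = g"
  unfolding coeff3_def by (intro poly_eqI) (metis icoeff3_of_nat coeff3_def)

lemma finite_coeff3_support: "finite {(i, j, k). coeff3 f i j k \<noteq> 0}"
proof (rule finite_subset)
  show "{(i, j, k). coeff3 f i j k \<noteq> 0} \<subseteq> (\<Union>k\<le>degree f. \<Union>j\<le>degree (coeff f k).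
      {..degree (coeff (coeff f k) j)} \<times> {j} \<times> {k})"
    by (auto simp: coeff3_def intro!: le_degree)
qed simp

lemma finite_icoeff3_support: "finite {(i, j, k). icoeff3 f i j k \<noteq> 0}"
proof (rule finite_subset)
  show "{(i, j, k). icoeff3 f i j k \<noteq> 0} \<subseteq>
      (\<lambda>(i, j, k). (int i, int j, int k)) ` {(i, j, k). coeff3 f i j k \<noteq> 0}"
    by (auto simp: icoeff3_def image_iff split: if_splits intro!: exI[of _ "nat _"])
qed (simp add: finite_coeff3_support)

lemma icoeff3_darboux_recurrence:
  assumes "Xfield a b c f = (cst3 \<alpha>0 + cst3 \<alpha>1 * X3 + cst3 \<alpha>2 * Y3 + cst3 \<alpha>3 * Z3
      + cst3 \<alpha>4 * X3 ^ 2 + cst3 \<alpha>5 * X3 * Z3) * f"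
  defines "F \<equiv> icoeff3 f"
  shows "of_int i * F i j k - of_int i * F i (j-1) k + of_real c * of_int (i-1) * F (i-1) j k
      - of_real a * of_int (i-1) * F (i-1) j (k-1) + of_int j * F (i-1) j k - of_int j * F i j k
      - of_real b * of_int k * F i j k + of_real a * of_int k * F (i-2) j k
    = \<alpha>0 * F i j k + \<alpha>1 * F (i-1) j k + \<alpha>2 * F i (j-1) k + \<alpha>3 * F i j (k-1)
      + \<alpha>4 * F (i-2) j k + \<alpha>5 * F (i-1) j (k-1)"
proof -
  have "Xfield a b c f = X3 * dX3 f - Y3 * (X3 * dX3 f) + cst3 (of_real c) * (X3 * (X3 * dX3 f))
      - cst3 (of_real a) * (X3 * (Z3 * (X3 * dX3 f))) + X3 * (Y3 * dY3 f) - Y3 * dY3 f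
      - cst3 (of_real b) * (Z3 * dZ3 f) + cst3 (of_real a) * (X3 * (X3 * (Z3 * dZ3 f)))"
    (is "_ = ?field")
    unfolding Xfield_def by (simp add: algebra_simps power2_eq_square)
  moreover have "Xfield a b c f = cst3 \<alpha>0 * f + cst3 \<alpha>1 * (X3 * f) + cst3 \<alpha>2 * (Y3 * f)
      + cst3 \<alpha>3 * (Z3 * f) + cst3 \<alpha>4 * (X3 * (X3 * f)) + cst3 \<alpha>5 * (X3 * (Z3 * f))"
    (is "_ = ?cofactor")
    unfolding assms(1) by (simp add: algebra_simps power2_eq_square)
  ultimately have "icoeff3 ?field i j k = icoeff3 ?cofactor i j k"
    by simp
  then show ?thesis
    unfolding F_def
    by (simp only: icoeff3_add icoeff3_diff icoeff3_cst3_mult icoeff3_X3_mult icoeff3_Y3_mult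
        icoeff3_Z3_mult icoeff3_dX3 icoeff3_dY3 icoeff3_dZ3) (simp add: algebra_simps)
qed

lemma icoeff3_shift_X: "0 \<le> i \<Longrightarrow>
    icoeff3 (map_poly (map_poly (poly_shift 1)) f) i j k = icoeff3 f (i + 1) j k"
  by (simp add: icoeff3_def coeff3_def coeff_map_poly coeff_poly_shift nat_add_distrib)

lemma icoeff3_shift_Y: "0 \<le> j \<Longrightarrow> icoeff3 (map_poly (poly_shift 1) f) i j k = icoeff3 f i (j + 1) k"
  by (simp add: icoeff3_def coeff3_def coeff_map_poly coeff_poly_shift nat_add_distrib)

lemma icoeff3_shift_Z: "0 \<le> k \<Longrightarrow> icoeff3 (poly_shift 1 f) i j k = icoeff3 f i j (k + 1)"
  by (simp add: icoeff3_def coeff3_def coeff_poly_shift nat_add_distrib)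

lemma X3_dvd_if_icoeff3_vanishes:
  assumes "\<And>j k. icoeff3 f 0 j k = 0"
  shows "X3 dvd f"
proof
  show "f = X3 * map_poly (map_poly (poly_shift 1)) f"
  proof (rule icoeff3_eqI)
    fix i j k
    show "icoeff3 f i j k = icoeff3 (X3 * map_poly (map_poly (poly_shift 1)) f) i j k"
      using assms icoeff3_shift_X[of "i - 1" f j k]
      by (cases i "0::int" rule: linorder_cases) (auto simp: icoeff3_X3_mult icoeff3_outside)
  qed
qed

lemma Y3_dvd_if_icoeff3_vanishes:
  assumes "\<And>i k. icoeff3 f i 0 k = 0"
  shows "Y3 dvd f"
proof
  show "f = Y3 * map_poly (poly_shift 1) f"
  proof (rule icoeff3_eqI)
    fix i j k
    show "icoeff3 f i j k = icoeff3 (Y3 * map_poly (poly_shift 1) f) i j k"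
      using assms icoeff3_shift_Y[of "j - 1" f i k]
      by (cases j "0::int" rule: linorder_cases) (auto simp: icoeff3_Y3_mult icoeff3_outside)
  qed
qed

lemma Z3_dvd_if_icoeff3_vanishes:
  assumes "\<And>i j. icoeff3 f i j 0 = 0"
  shows "Z3 dvd f"
proof
  show "f = Z3 * poly_shift 1 f"
  proof (rule icoeff3_eqI)
    fix i j k
    show "icoeff3 f i j k = icoeff3 (Z3 * poly_shift 1 f) i j k"
      using assms icoeff3_shift_Z[of "k - 1" f i j]
      by (cases k "0::int" rule: linorder_cases) (auto simp: icoeff3_Z3_mult icoeff3_outside)
  qed
qed

lemma tdeg3_le:
  assumes "\<And>i j k. coeff3 f i j k \<noteq> 0 \<Longrightarrow> i + j + k \<le> n"
  shows "tdeg3 f \<le> n"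
proof -
  have degrees: "{i + j + k | i j k. coeff3 f i j k \<noteq> 0} \<subseteq> {..n}"
    using assms by auto
  then have "finite {i + j + k | i j k. coeff3 f i j k \<noteq> 0}"
    by (rule finite_subset) simp
  with degrees show ?thesis
    unfolding tdeg3_def by auto
qed

lemma irreducible_coordinate_dvd_tdeg3_le_1:
  assumes "irreducible f" "V \<in> {X3, Y3, Z3}" "V dvd f"
  shows "tdeg3 f \<le> 1"
proof -
  obtain u where f: "f = V * u"
    using assms(3) by blast
  have "\<not> is_unit V"
    using assms(2) by (auto simp: X3_def Y3_def Z3_def is_unit_poly_iff)
  then have "is_unit u"
    using irreducibleD[OF assms(1) f] by blast
  then obtain d where u: "u = cst3 d"
    by (auto simp: is_unit_poly_iff cst3_def)
  show ?thesis
  proof (rule tdeg3_le)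
    fix i j k
    assume "coeff3 f i j k \<noteq> 0"
    then have "icoeff3 (V * cst3 d) (int i) (int j) (int k) \<noteq> 0"
      by (simp add: f u icoeff3_of_nat)
    with assms(2) show "i + j + k \<le> 1"
      by (auto simp: icoeff3_X3_mult icoeff3_Y3_mult icoeff3_Z3_mult icoeff3_cst3 split: if_splits)
  qed
qed

lemma irreducible_coordinate_free_terms:
  assumes "irreducible f" "1 < tdeg3 f"
  shows "\<exists>j k. icoeff3 f 0 j k \<noteq> 0" "\<exists>i k. icoeff3 f i 0 k \<noteq> 0" "\<exists>i j. icoeff3 f i j 0 \<noteq> 0"
  using assms irreducible_coordinate_dvd_tdeg3_le_1[of f] X3_dvd_if_icoeff3_vanishes[of f]
    Y3_dvd_if_icoeff3_vanishes[of f] Z3_dvd_if_icoeff3_vanishes[of f]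
  by (auto simp: not_le[symmetric])

text \<open>\<open>F i j k\<close> stands for the coefficient of \<open>x^i y^j z^k\<close> in \<open>f\<close>, and \<open>recurrence\<close>
  compares these coefficients in \<open>X f = K f\<close> for \<open>K = \<alpha>0 + \<alpha>1 x + \<alpha>2 y + \<alpha>3 z + \<alpha>4 x^2 + \<alpha>5 x z\<close>.\<close>

locale darboux_recurrence =
  fixes a b c \<alpha>0 \<alpha>1 \<alpha>2 \<alpha>3 \<alpha>4 \<alpha>5 :: complex
    and F :: "int \<Rightarrow> int \<Rightarrow> int \<Rightarrow> complex"
  assumes a_nonzero: "a \<noteq> 0"
    and F_outside: "i < 0 \<or> j < 0 \<or> k < 0 \<Longrightarrow> F i j k = 0"
    and finite_support: "finite {(i, j, k). F i j k \<noteq> 0}"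
    and recurrence:
      "of_int i * F i j k - of_int i * F i (j-1) k + c * of_int (i-1) * F (i-1) j k
        - a * of_int (i-1) * F (i-1) j (k-1) + of_int j * F (i-1) j k - of_int j * F i j k
        - b * of_int k * F i j k + a * of_int k * F (i-2) j k
      = \<alpha>0 * F i j k + \<alpha>1 * F (i-1) j k + \<alpha>2 * F i (j-1) k + \<alpha>3 * F i j (k-1)
        + \<alpha>4 * F (i-2) j k + \<alpha>5 * F (i-1) j (k-1)"
    and x_free_term: "\<exists>j k. F 0 j k \<noteq> 0"
    and y_free_term: "\<exists>i k. F i 0 k \<noteq> 0"
    and z_free_term: "\<exists>i j. F i j 0 \<noteq> 0"
begin

lemma F_neg [simp]:
  "i < 0 \<Longrightarrow> F i j k = 0" "j < 0 \<Longrightarrow> F i j k = 0" "k < 0 \<Longrightarrow> F i j k = 0"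
  by (simp_all add: F_outside)

lemma extremal_term:
  fixes w :: "int \<Rightarrow> int \<Rightarrow> int \<Rightarrow> int"
  assumes "\<exists>i j k. F i j k \<noteq> 0 \<and> P i j k"
  obtains i j k where "F i j k \<noteq> 0" "P i j k"
    "\<And>i' j' k'. F i' j' k' \<noteq> 0 \<Longrightarrow> P i' j' k' \<Longrightarrow> w i' j' k' \<le> w i j k"
proof -
  let ?S = "{(i, j, k). F i j k \<noteq> 0 \<and> P i j k}" and ?w = "\<lambda>(i, j, k). w i j k"
  have finite: "finite ?S"
    by (rule finite_subset[OF _ finite_support]) auto
  moreover have "?S \<noteq> {}"
    using assms by auto
  ultimately obtain x where "x \<in> ?S" and max: "Max (?w ` ?S) = ?w x"
    by (rule obtains_MAX)
  moreover obtain i j k where x: "x = (i, j, k)"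
    by (cases x)
  ultimately show ?thesis
  proof (intro that[of i j k])
    fix i' j' k'
    assume "F i' j' k' \<noteq> 0" "P i' j' k'"
    then have "w i' j' k' \<le> Max (?w ` ?S)"
      using finite by (intro Max_ge) (auto simp: image_iff)
    with max x show "w i' j' k' \<le> w i j k"
      by simp
  qed auto
qed

lemma alpha3_eq_0: "\<alpha>3 = 0"
proof -
  obtain i j m where "F i j m \<noteq> 0" "i = 0"
    and top: "\<And>i' j' k'. F i' j' k' \<noteq> 0 \<Longrightarrow> i' = 0 \<Longrightarrow> k' \<le> m"
    by (rule extremal_term[where P = "\<lambda>i _ _. i = 0" and w = "\<lambda>_ _ k. k"]) (use x_free_term in auto)
  moreover have "F 0 j' k' = 0" if "m < k'" for j' k'
    using top that by force
  ultimately show ?thesis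
    using recurrence[of 0 j "m + 1"] by simp
qed

lemma alpha2_eq_0: "\<alpha>2 = 0"
proof -
  obtain i j m where "F i j m \<noteq> 0" "i = 0"
    and top: "\<And>i' j' k'. F i' j' k' \<noteq> 0 \<Longrightarrow> i' = 0 \<Longrightarrow> j' \<le> j"
    by (rule extremal_term[where P = "\<lambda>i _ _. i = 0" and w = "\<lambda>_ j _. j"]) (use x_free_term in auto)
  moreover have "F 0 j' k' = 0" if "j < j'" for j' k'
    using top that by force
  ultimately show ?thesis
    using recurrence[of 0 "j + 1" m] by simp
qed

lemma alpha4_eq_0: "\<alpha>4 = 0"
proof -
  obtain i j k where "F i j k \<noteq> 0" "k = 0"
    and top: "\<And>i' j' k'. F i' j' k' \<noteq> 0 \<Longrightarrow> k' = 0 \<Longrightarrow> i' \<le> i"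
    by (rule extremal_term[where P = "\<lambda>_ _ k. k = 0" and w = "\<lambda>i _ _. i"]) (use z_free_term in auto)
  moreover have "F i' j' 0 = 0" if "i < i'" for i' j'
    using top that by force
  ultimately show ?thesis
    using recurrence[of "i + 2" j 0] by simp
qed

lemma max_weight_face_recurrence:
  assumes above: "\<And>i j k. F i j k \<noteq> 0 \<Longrightarrow> i + 2 * j \<le> W" and "i + 2 * j = W"
  shows "of_int i * F i j k = a * of_int k * F (i - 2) (j + 1) k"
proof -
  have "F i' j' k' = 0" if "W < i' + 2 * j'" for i' j' k'
    using above that by force
  then show ?thesis
    using recurrence[of i "j + 1" k] \<open>i + 2 * j = W\<close> by (simp add: alpha2_eq_0 alpha4_eq_0)
qed

lemma max_weight_face_vanishes:
  assumes above: "\<And>i j k. F i j k \<noteq> 0 \<Longrightarrow> i + 2 * j \<le> W"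
    and "i + 2 * j = W" "i \<noteq> 0 \<or> k \<noteq> 0"
  shows "F i j k = 0"
proof (cases "k = 0")
  case True
  then show ?thesis
    using max_weight_face_recurrence[OF above \<open>i + 2 * j = W\<close>, where k = k] \<open>i \<noteq> 0 \<or> k \<noteq> 0\<close> by simp
next
  case False
  have step: "F (i' - 2) (j' + 1) k = 0" if "i' + 2 * j' = W" "F i' j' k = 0" for i' j'
    using max_weight_face_recurrence[OF above that(1), where k = k] that(2) False a_nonzero by simp
  have "F (W - 2 * int t) (int t) k = 0" for t
  proof (induction t)
    case 0
    show ?case
      using step[of "W + 2" "-1"] by simp
  next
    case (Suc t)
    then show ?case
      using step[of "W - 2 * int t" "int t"] by (simp add: algebra_simps)
  qed
  from this[of "nat j"] show ?thesis
    using \<open>i + 2 * j = W\<close> by (cases "j < 0") auto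
qed

lemma max_weight_term_is_y_power:
  obtains q where "0 \<le> q" "F 0 q 0 \<noteq> 0" "\<And>i j k. F i j k \<noteq> 0 \<Longrightarrow> i + 2 * j \<le> 2 * q"
proof -
  obtain i j k where nonzero: "F i j k \<noteq> 0"
    and top: "\<And>i' j' k'. F i' j' k' \<noteq> 0 \<Longrightarrow> i' + 2 * j' \<le> i + 2 * j"
    by (rule extremal_term[where P = "\<lambda>_ _ _. True" and w = "\<lambda>i j _. i + 2 * j"])
      (use x_free_term in auto)
  then have "i = 0" "k = 0"
    using max_weight_face_vanishes[of "i + 2 * j" i j k] by auto
  with nonzero top show ?thesis
    by (intro that[of j]) (auto simp: not_less[symmetric])
qed

lemma alpha5_eq_0: "\<alpha>5 = 0"
proof (rule ccontr)
  assume "\<alpha>5 \<noteq> 0"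
  obtain q where "0 \<le> q" "F 0 q 0 \<noteq> 0"
    and above: "\<And>i j k. F i j k \<noteq> 0 \<Longrightarrow> i + 2 * j \<le> 2 * q"
    using max_weight_term_is_y_power by blast
  have beyond: "F i j k = 0" if "2 * q < i + 2 * j" for i j k
    using above that by force
  have face: "F i j k = 0" if "i + 2 * j = 2 * q" "i \<noteq> 0 \<or> k \<noteq> 0" for i j k
    using max_weight_face_vanishes[OF above that] .
  have "- F 1 (q - 1) 1 = \<alpha>5 * F 0 q 0"
    using recurrence[of 1 q 1] by (simp add: beyond face alpha2_eq_0 alpha3_eq_0 alpha4_eq_0)
  then have start: "F 1 (q - 1) 1 \<noteq> 0"
    using \<open>\<alpha>5 \<noteq> 0\<close> \<open>F 0 q 0 \<noteq> 0\<close> by (metis mult_eq_0_iff neg_equal_0_iff_equal)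
  have step: "of_int (3 + 2 * t) * F (3 + 2 * t) (q - 2 - t) 1 = a * F (1 + 2 * t) (q - 1 - t) 1"
    if "0 \<le> t" for t
    using recurrence[of "3 + 2 * t" "q - 1 - t" 1] that
    by (simp add: beyond face alpha2_eq_0 alpha3_eq_0 alpha4_eq_0 algebra_simps)
  have "F (1 + 2 * int n) (q - 1 - int n) 1 \<noteq> 0" for n
  proof (induction n)
    case 0
    show ?case
      using start by simp
  next
    case (Suc n)
    then show ?case
      using step[of "int n"] a_nonzero by (auto simp: algebra_simps)
  qed
  from this[of "nat q"] show False
    using \<open>0 \<le> q\<close> by simp
qed

lemma alpha1_eq_0: "\<alpha>1 = 0"
proof -
  obtain i j m where "F i j m \<noteq> 0" "j = 0"
    and top: "\<And>i' j' k'. F i' j' k' \<noteq> 0 \<Longrightarrow> j' = 0 \<Longrightarrow> k' \<le> m"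
    by (rule extremal_term[where P = "\<lambda>_ j _. j = 0" and w = "\<lambda>_ _ k. k"]) (use y_free_term in auto)
  have beyond: "F i' 0 k' = 0" if "m < k'" for i' k'
    using top that by force
  have only_i_0: "i' = 0" if "F i' 0 m \<noteq> 0" for i'
  proof -
    have "a * of_int i' * F i' 0 m = 0"
      using recurrence[of "i' + 1" 0 "m + 1"] by (simp add: beyond alpha3_eq_0 alpha5_eq_0)
    with that a_nonzero show ?thesis
      by simp
  qed
  have "F 0 0 m \<noteq> 0"
    using \<open>F i j m \<noteq> 0\<close> \<open>j = 0\<close> only_i_0 by auto
  moreover have "F 1 0 m = 0"
    using only_i_0[of 1] by auto
  ultimately show ?thesis
    using recurrence[of 1 0 m] by (simp add: alpha3_eq_0 alpha5_eq_0)
qed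

lemma max_y_free_term_is_x_power:
  obtains n where "0 \<le> n" "F n 0 0 \<noteq> 0" "\<And>i k. F i 0 k \<noteq> 0 \<Longrightarrow> i + k \<le> n"
proof -
  obtain i j k where "F i j k \<noteq> 0" "j = 0"
    and top: "\<And>i' j' k'. F i' j' k' \<noteq> 0 \<Longrightarrow> j' = 0 \<Longrightarrow> i' + k' \<le> i + k"
    by (rule extremal_term[where P = "\<lambda>_ j _. j = 0" and w = "\<lambda>i _ k. i + k"]) (use y_free_term in auto)
  define n where "n = i + k"
  have beyond: "F i' 0 k' = 0" if "n < i' + k'" for i' k'
    using top that n_def by force
  have step: "F (n - t - 1) 0 (t + 1) = 0" if "0 \<le> t" "F (n - t) 0 t = 0" for t
  proof -
    have "a * of_int (t + 1) * F (n - t - 1) 0 (t + 1) = 0"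
      using recurrence[of "n - t + 1" 0 "t + 1"] that by (simp add: beyond alpha4_eq_0 alpha5_eq_0)
    moreover have "(of_int (t + 1) :: complex) \<noteq> 0"
      using \<open>0 \<le> t\<close> by (simp only: of_int_eq_0_iff)
    ultimately show ?thesis
      using a_nonzero by (metis mult_eq_0_iff)
  qed
  have "F n 0 0 \<noteq> 0"
  proof
    assume "F n 0 0 = 0"
    have "F (n - int t) 0 (int t) = 0" for t
    proof (induction t)
      case 0
      show ?case
        using \<open>F n 0 0 = 0\<close> by simp
    next
      case (Suc t)
      then show ?case
        using step[of "int t"] by (simp add: algebra_simps)
    qed
    from this[of "nat k"] show False
      using \<open>F i j k \<noteq> 0\<close> \<open>j = 0\<close> n_def by (cases "k < 0") auto
  qed
  moreover from this have "0 \<le> n"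
    by (cases "n < 0") auto
  moreover have "i' + k' \<le> n" if "F i' 0 k' \<noteq> 0" for i' k'
    using beyond[of i' k'] that by linarith
  ultimately show ?thesis
    using that by blast
qed

lemma alpha0_eq_x_exponent:
  assumes "F n 0 0 \<noteq> 0" and corner: "\<And>i k. F i 0 k \<noteq> 0 \<Longrightarrow> i + k \<le> n"
  shows "\<alpha>0 = of_int n"
proof -
  have "F (n + 1) 0 0 = 0"
    using corner[of "n + 1" 0] by auto
  then have "c * of_int n * F n 0 0 = 0"
    using recurrence[of "n + 1" 0 0] by (simp add: alpha1_eq_0 alpha4_eq_0)
  then have "c * of_int (n - 1) * F (n - 1) 0 0 = 0"
    using \<open>F n 0 0 \<noteq> 0\<close> by (cases "n = 0") auto
  moreover have "of_int n * F n 0 0 + c * of_int (n - 1) * F (n - 1) 0 0 = \<alpha>0 * F n 0 0"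
    using recurrence[of n 0 0] by (simp add: alpha1_eq_0 alpha4_eq_0)
  ultimately have "of_int n * F n 0 0 = \<alpha>0 * F n 0 0"
    by (metis add.right_neutral)
  with \<open>F n 0 0 \<noteq> 0\<close> show ?thesis
    by simp
qed

lemma alpha0_eq_minus_y_exponent:
  assumes "F 0 j 0 \<noteq> 0"
  shows "\<alpha>0 = - of_int j"
proof -
  have "- of_int j * F 0 j 0 = \<alpha>0 * F 0 j 0"
    using recurrence[of 0 j 0] by (simp add: alpha2_eq_0)
  with assms show ?thesis
    by (metis mult_cancel_right mult_minus_left)
qed

lemma alpha0_eq_0: "\<alpha>0 = 0"
proof -
  obtain q where "0 \<le> q" and y_power: "F 0 q 0 \<noteq> 0"
    and "\<And>i j k. F i j k \<noteq> 0 \<Longrightarrow> i + 2 * j \<le> 2 * q"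
    using max_weight_term_is_y_power by blast
  obtain n where "0 \<le> n" and x_power: "F n 0 0 \<noteq> 0"
    and corner: "\<And>i k. F i 0 k \<noteq> 0 \<Longrightarrow> i + k \<le> n"
    using max_y_free_term_is_x_power by blast
  have "of_int n = (- of_int q :: complex)"
    using alpha0_eq_x_exponent[OF x_power corner] alpha0_eq_minus_y_exponent[OF y_power] by simp
  then have "n = - q"
    by (metis of_int_eq_iff of_int_minus)
  with \<open>0 \<le> q\<close> \<open>0 \<le> n\<close> have "q = 0"
    by simp
  with alpha0_eq_minus_y_exponent[OF y_power] show ?thesis
    by simp
qed

end

lemma darboux_recurrence_icoeff3:
  assumes "a \<noteq> 0" "irreducible f" "1 < tdeg3 f"
    and "Xfield a b c f = (cst3 \<alpha>0 + cst3 \<alpha>1 * X3 + cst3 \<alpha>2 * Y3 + cst3 \<alpha>3 * Z3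
      + cst3 \<alpha>4 * X3 ^ 2 + cst3 \<alpha>5 * X3 * Z3) * f"
  shows "darboux_recurrence (of_real a) (of_real b) (of_real c) \<alpha>0 \<alpha>1 \<alpha>2 \<alpha>3 \<alpha>4 \<alpha>5 (icoeff3 f)"
  by (unfold_locales; (rule icoeff3_darboux_recurrence[OF assms(4)])?)
    (use assms in \<open>simp_all add: icoeff3_outside finite_icoeff3_support irreducible_coordinate_free_terms\<close>)

theorem lemma4p3:
  fixes a b c :: real and f :: mpoly3
    and \<alpha>0 \<alpha>1 \<alpha>2 \<alpha>3 :: complex and N4 N6 :: nat
  assumes "a > 0" and "b \<ge> 0" and "c \<ge> 0"
    and "irreducible f" and "tdeg3 f > 1"
    and "K = cst3 \<alpha>0 + cst3 \<alpha>1 * X3 + cst3 \<alpha>2 * Y3 + cst3 \<alpha>3 * Z3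
             + cst3 (of_nat N4 * of_real a) * X3 ^ 2 - cst3 (of_nat N6 * of_real a) * X3 * Z3"
    and "K \<noteq> 0"
    and "darboux a b c f K"
  shows "\<alpha>0 = 0 \<and> \<alpha>1 = 0 \<and> \<alpha>3 = 0 \<and> N4 = 0 \<and> N6 = 0"
proof -
  have "cst3 (- r) = - cst3 r" for r
    by (simp add: cst3_def)
  then have "Xfield a b c f = (cst3 \<alpha>0 + cst3 \<alpha>1 * X3 + cst3 \<alpha>2 * Y3 + cst3 \<alpha>3 * Z3
      + cst3 (of_nat N4 * of_real a) * X3 ^ 2 + cst3 (- (of_nat N6 * of_real a)) * X3 * Z3) * f"
    using assms(6,8) by (simp add: darboux_def)
  then interpret darboux_recurrence "of_real a" "of_real b" "of_real c" \<alpha>0 \<alpha>1 \<alpha>2 \<alpha>3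
      "of_nat N4 * of_real a" "- (of_nat N6 * of_real a)" "icoeff3 f"
    using assms(1,4,5) by (intro darboux_recurrence_icoeff3) auto
  show ?thesis
    using alpha0_eq_0 alpha1_eq_0 alpha3_eq_0 alpha4_eq_0 alpha5_eq_0 \<open>a > 0\<close> by simp
qed

end
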